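(* Let $\tilde{\mathcal P}$ be a delayed-reward MDP with episodic reward and let $\mathcal P$ be an SDP obtained from $\tilde{\mathcal P}$ by a (possibly higher order Markov) reward redistribution such that $\mathcal P$ is strictly return-equivalent to $\tilde{\mathcal P}$. Fix a policy $\pi$ and assume the reward redistribution is optimal, i.e. $\kappa(T-t-1,t)=0$ for $0\le t\le T-1$. Suppose further that for all $0\le t\le T$ and all histories with positive probability under $\pi$, $$\mathbb E_\pi\left[\sum_{\tau=0}^{T-t-1}R_{t+2+\tau}\mid s_t,a_t\right]=\mathbb E_\pi\left[\sum_{\tau=0}^{T-t-1}R_{t+2+\tau}\mid s_0,a_0,\dots,s_t,a_t\right].$$ Then for all $1\le t\le T$, $$\mathbb E_\pi\left[R_{t+1}\mid s_{t-1},a_{t-1},s_t,a_t\right]=\tilde q^\pi(s_t,a_t)-\tilde q^\pi(s_{t-1},a_{t-1}).$$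
   Context: Setting: finite horizon $T$, discount $\gamma=1$, finite state set $\mathcal S$ and action set $\mathcal A$; states are time-aware. Episodes are $s_0,a_0,R_1,s_1,a_1,R_2,\dots,s_T,a_T,R_{T+1}$. The MDP $\tilde{\mathcal P}$ has Markov transition-reward distribution $p(s_{t+1},\tilde R_{t+1}\mid s_t,a_t)$ and episodic (delayed) reward: $\tilde R_{t+1}=0$ for $t<T$, so the return is $\tilde G_0=\tilde R_{T+1}$. A sequence-Markov decision process (SDP) is a decision process with the same Markov state transition probabilities but whose reward $R_{t+1}$ may depend on the whole history $(s_0,a_0,\dots,s_t,a_t)$ (higher order Markov reward), drawn conditionally on that history and independently of later states and actions; a reward redistribution produces such an SDP $\mathcal P$ with rewards $R_{1},\dots,R_{T+1}$ and return $G_0=\sum_{t=0}^{T}R_{t+1}$. Two SDPs are strictly return-equivalent if for every policy they have the same expected return at $t=0$ and additionally the same expected return for every episode, i.e. $\mathbb E[\tilde G_0\mid s_0,a_0,\dots,s_T,a_T]=\mathbb E[G_0\mid s_0,a_0,\dots,s_T,a_T]$. For a policy $\pi(a\mid s)$, $\mathbb E_\pi[\cdot\mid\ldots]$ is the expectation over episodes generated by $p$ and $\pi$ containing the conditioned state-action pairs at the indicated times. $\tilde q^\pi(s_t,a_t)=\mathbb E_\pi[\sum_{k=0}^{T-t}\tilde R_{t+k+1}\mid s_t,a_t]=\mathbb E_\pi[\tilde R_{T+1}\mid s_t,a_t]$ is the $Q$-function of $\tilde{\mathcal P}$. The expected future rewards are $\kappa(m,t-1)=\mathbb E_\pi\left[\sum_{\tau=0}^{m}R_{t+1+\tau}\mid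 s_{t-1},a_{t-1}\right]$ (redistributed rewards of $\mathcal P$), and a reward redistribution is called optimal if $\kappa(T-t-1,t)=0$ for $0\le t\le T-1$. *)

theory Defs
  imports Complex_Main
begin

text \<open>An episode (or a history prefix) is a list of
  state-action pairs; element k of the list is (s_k, a_k). A full episode
  s_0,a_0,...,s_T,a_T has length T+1; the history up to time t is take (Suc t) e.\<close>

definition is_dist :: "('x::finite \<Rightarrow> real) \<Rightarrow> bool" where
  "is_dist d \<longleftrightarrow> (\<forall>x. 0 \<le> d x) \<and> (\<Sum>x\<in>UNIV. d x) = 1"

definition is_policy :: "('s \<Rightarrow> 'a::finite \<Rightarrow> real) \<Rightarrow> bool" where
  "is_policy \<pi> \<longleftrightarrow> (\<forall>s. is_dist (\<pi> s))"

definition is_kernel :: "('s \<Rightarrow> 'a \<Rightarrow> 's::finite \<Rightarrow> real) \<Rightarrow> bool" where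
  "is_kernel P \<longleftrightarrow> (\<forall>s a. is_dist (P s a))"

definition ep_prob ::
  "('s \<Rightarrow> real) \<Rightarrow> ('s \<Rightarrow> 'a \<Rightarrow> 's \<Rightarrow> real) \<Rightarrow> ('s \<Rightarrow> 'a \<Rightarrow> real) \<Rightarrow> ('s \<times> 'a) list \<Rightarrow> real" where
  "ep_prob p0 P \<pi> e =
     p0 (fst (e ! 0)) * \<pi> (fst (e ! 0)) (snd (e ! 0)) *
     (\<Prod>k<length e - 1. P (fst (e ! k)) (snd (e ! k)) (fst (e ! Suc k)) *
                         \<pi> (fst (e ! Suc k)) (snd (e ! Suc k)))"

definition episodes :: "nat \<Rightarrow> ('s \<times> 'a) list set" where
  "episodes T = {e. length e = Suc T}"

definition ev_prob ::
  "('s \<Rightarrow> real) \<Rightarrow> ('s \<Rightarrow> 'a \<Rightarrow> 's \<Rightarrow> real) \<Rightarrow> ('s \<Rightarrow> 'a \<Rightarrow> real) \<Rightarrow> nat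
    \<Rightarrow> (('s \<times> 'a) list \<Rightarrow> bool) \<Rightarrow> real" where
  "ev_prob p0 P \<pi> T A = (\<Sum>e\<in>{e\<in>episodes T. A e}. ep_prob p0 P \<pi> e)"

definition cond_exp ::
  "('s \<Rightarrow> real) \<Rightarrow> ('s \<Rightarrow> 'a \<Rightarrow> 's \<Rightarrow> real) \<Rightarrow> ('s \<Rightarrow> 'a \<Rightarrow> real) \<Rightarrow> nat
    \<Rightarrow> (('s \<times> 'a) list \<Rightarrow> real) \<Rightarrow> (('s \<times> 'a) list \<Rightarrow> bool) \<Rightarrow> real" where
  "cond_exp p0 P \<pi> T f A =
     (\<Sum>e\<in>{e\<in>episodes T. A e}. ep_prob p0 P \<pi> e * f e) / ev_prob p0 P \<pi> T A"

text \<open>Q-function of the delayed-reward MDP: q~(s_t,a_t) = E_pi[R~_{T+1} | s_t, a_t], where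
  rT s a is the expected episodic reward E[R~_{T+1} | s_T = s, a_T = a].\<close>
definition qtilde ::
  "('s \<Rightarrow> real) \<Rightarrow> ('s \<Rightarrow> 'a \<Rightarrow> 's \<Rightarrow> real) \<Rightarrow> ('s \<Rightarrow> 'a \<Rightarrow> real) \<Rightarrow> nat
    \<Rightarrow> ('s \<Rightarrow> 'a \<Rightarrow> real) \<Rightarrow> nat \<Rightarrow> 's \<Rightarrow> 'a \<Rightarrow> real" where
  "qtilde p0 P \<pi> T rT t s a =
     cond_exp p0 P \<pi> T (\<lambda>e. rT (fst (e ! T)) (snd (e ! T))) (\<lambda>e. e ! t = (s, a))"

text \<open>Redistributed future rewards after time t+1:
  sum_{tau=0}^{T-t-1} R_{t+2+tau}, where r k h = E[R_{k+1} | history h = s_0,a_0,...,s_k,a_k].\<close>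
definition future_rew ::
  "nat \<Rightarrow> (nat \<Rightarrow> ('s \<times> 'a) list \<Rightarrow> real) \<Rightarrow> nat \<Rightarrow> ('s \<times> 'a) list \<Rightarrow> real" where
  "future_rew T r t e = (\<Sum>\<tau><T - t. r (t + 1 + \<tau>) (take (t + 2 + \<tau>) e))"

end

theory Submission
  imports Defs
begin

text \<open>For a reachable history h up to time t, strict return-equivalence splits the episodic
  reward into the cumulative redistributed reward up to t plus the future rewards. Taking
  E[- | h], the episodic reward gives q~(s_t, a_t) by the Markov property of the episode
  distribution, while the future rewards may be conditioned on (s_t, a_t) alone by hypothesis
  and then vanish by optimality. So the cumulative reward up to t equals q~(s_t, a_t) on every
  reachable history, and R_{t+1} is the difference of two consecutive such values on every
  reachable episode.\<close>

definition step_prob ::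
  "('s \<Rightarrow> 'a \<Rightarrow> 's \<Rightarrow> real) \<Rightarrow> ('s \<Rightarrow> 'a \<Rightarrow> real) \<Rightarrow> 's \<times> 'a \<Rightarrow> 's \<times> 'a \<Rightarrow> real" where
  "step_prob P \<pi> x y = P (fst x) (snd x) (fst y) * \<pi> (fst y) (snd y)"

fun path_prob :: "('s \<Rightarrow> 'a \<Rightarrow> 's \<Rightarrow> real) \<Rightarrow> ('s \<Rightarrow> 'a \<Rightarrow> real) \<Rightarrow> ('s \<times> 'a) list \<Rightarrow> real" where
  "path_prob P \<pi> (x # y # rest) = step_prob P \<pi> x y * path_prob P \<pi> (y # rest)"
| "path_prob P \<pi> _ = 1"

lemma prod_step_prob_eq_path_prob:
  "(\<Prod>k<length e - 1. P (fst (e ! k)) (snd (e ! k)) (fst (e ! Suc k)) * \<pi> (fst (e ! Suc k)) (snd (e ! Suc k)))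
     = path_prob P \<pi> e"
proof (induction P \<pi> e rule: path_prob.induct)
  case (1 P \<pi> x y rest)
  have "length (x # y # rest) - 1 = Suc (length (y # rest) - 1)" by simp
  then show ?case using 1 by (simp only: prod.lessThan_Suc_shift) (simp add: step_prob_def)
qed auto

lemma ep_prob_eq_path_prob:
  "ep_prob p0 P \<pi> e = p0 (fst (e ! 0)) * \<pi> (fst (e ! 0)) (snd (e ! 0)) * path_prob P \<pi> e"
  unfolding ep_prob_def prod_step_prob_eq_path_prob ..

lemma path_prob_append:
  "h \<noteq> [] \<Longrightarrow> path_prob P \<pi> (h @ v) = path_prob P \<pi> h * path_prob P \<pi> (last h # v)"
  by (induction h rule: induct_list012) auto

lemma ep_prob_append:
  "h \<noteq> [] \<Longrightarrow> ep_prob p0 P \<pi> (h @ v) = ep_prob p0 P \<pi> h * path_prob P \<pi> (last h # v)"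
  by (simp add: ep_prob_eq_path_prob path_prob_append nth_append)

lemma last_eq_nth: "length h = Suc t \<Longrightarrow> last h = h ! t"
  by (cases h rule: rev_cases) auto

lemma drop_eq_last: "length h = Suc t \<Longrightarrow> drop t h = [last h]"
  by (cases h rule: rev_cases) auto

lemma sum_lists_length_add:
  "(\<Sum>e\<in>{e. length e = n + m}. F e) = (\<Sum>h\<in>{h. length h = n}. \<Sum>v\<in>{v. length v = m}. F (h @ v))"
proof -
  have "(\<Sum>p\<in>{h. length h = n} \<times> {v. length v = m}. F (fst p @ snd p)) = (\<Sum>e\<in>{e. length e = n + m}. F e)"
    by (rule sum.reindex_bij_witness[where i="\<lambda>e. (take n e, drop n e)" and j="\<lambda>p. fst p @ snd p"]) auto
  then show ?thesis by (simp add: sum.cartesian_product split_def)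
qed

lemma finite_lists_length: "finite {e :: ('x::finite) list. length e = n}"
  using finite_lists_length_eq[of "UNIV :: 'x set" n] by simp

lemma finite_episodes: "finite (episodes T :: ('s::finite \<times> 'a::finite) list set)"
  unfolding episodes_def by (rule finite_lists_length)

definition cont_sum ::
  "('s \<Rightarrow> 'a \<Rightarrow> 's \<Rightarrow> real) \<Rightarrow> ('s \<Rightarrow> 'a \<Rightarrow> real) \<Rightarrow> nat \<Rightarrow> (('s \<times> 'a) list \<Rightarrow> real) \<Rightarrow> 's \<times> 'a \<Rightarrow> real" where
  "cont_sum P \<pi> n f z = (\<Sum>v\<in>{v. length v = n}. path_prob P \<pi> (z # v) * f (z # v))"

lemma sum_episodes_split_at:
  fixes p0 :: "'s::finite \<Rightarrow> real" and P :: "'s \<Rightarrow> 'a::finite \<Rightarrow> 's \<Rightarrow> real"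
  assumes "t \<le> T"
  shows "(\<Sum>e\<in>episodes T. ep_prob p0 P \<pi> e * (g (take (Suc t) e) * f (drop t e))) =
    (\<Sum>h\<in>{h. length h = Suc t}. ep_prob p0 P \<pi> h * g h * cont_sum P \<pi> (T - t) f (last h))"
proof -
  have "episodes T = {e :: ('s \<times> 'a) list. length e = Suc t + (T - t)}"
    using assms by (auto simp: episodes_def)
  then have "(\<Sum>e\<in>episodes T. ep_prob p0 P \<pi> e * (g (take (Suc t) e) * f (drop t e))) =
      (\<Sum>h\<in>{h. length h = Suc t}. \<Sum>v\<in>{v. length v = T - t}.
         ep_prob p0 P \<pi> (h @ v) * (g (take (Suc t) (h @ v)) * f (drop t (h @ v))))"
    by (simp only: sum_lists_length_add)
  also have "\<dots> = (\<Sum>h\<in>{h. length h = Suc t}. \<Sum>v\<in>{v. length v = T - t}.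
         ep_prob p0 P \<pi> h * g h * (path_prob P \<pi> (last h # v) * f (last h # v)))"
  proof (intro sum.cong refl)
    fix h v :: "('s \<times> 'a) list" assume "h \<in> {h. length h = Suc t}"
    then have "length h = Suc t" "h \<noteq> []" by auto
    then show "ep_prob p0 P \<pi> (h @ v) * (g (take (Suc t) (h @ v)) * f (drop t (h @ v)))
      = ep_prob p0 P \<pi> h * g h * (path_prob P \<pi> (last h # v) * f (last h # v))"
      by (simp add: ep_prob_append drop_eq_last)
  qed
  finally show ?thesis by (simp only: cont_sum_def sum_distrib_left)
qed

lemma ev_prob_eq_indicator_sum:
  fixes p0 :: "'s::finite \<Rightarrow> real" and P :: "'s \<Rightarrow> 'a::finite \<Rightarrow> 's \<Rightarrow> real"
  shows "ev_prob p0 P \<pi> T A = (\<Sum>e\<in>episodes T. ep_prob p0 P \<pi> e * (of_bool (A e) * 1))"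
  unfolding ev_prob_def sum.inter_filter[OF finite_episodes] by (intro sum.cong) auto

lemma cond_exp_eq_indicator_sums:
  fixes p0 :: "'s::finite \<Rightarrow> real" and P :: "'s \<Rightarrow> 'a::finite \<Rightarrow> 's \<Rightarrow> real"
  shows "cond_exp p0 P \<pi> T F A = (\<Sum>e\<in>episodes T. ep_prob p0 P \<pi> e * (of_bool (A e) * F e)) /
     (\<Sum>e\<in>episodes T. ep_prob p0 P \<pi> e * (of_bool (A e) * 1))"
  unfolding cond_exp_def ev_prob_def sum.inter_filter[OF finite_episodes]
  by (intro arg_cong2[where f="(/)"] sum.cong) auto

text \<open>Markov property: the conditional expectation depends on the event only through z.\<close>
lemma cond_exp_future_given_history:
  fixes p0 :: "'s::finite \<Rightarrow> real" and P :: "'s \<Rightarrow> 'a::finite \<Rightarrow> 's \<Rightarrow> real"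
  assumes "t \<le> T" and fixes_z: "\<And>h. length h = Suc t \<Longrightarrow> G h \<Longrightarrow> h ! t = z"
    and pos: "ev_prob p0 P \<pi> T (\<lambda>e. G (take (Suc t) e)) \<noteq> 0"
  shows "cond_exp p0 P \<pi> T (\<lambda>e. f (drop t e)) (\<lambda>e. G (take (Suc t) e)) =
     cont_sum P \<pi> (T - t) f z / cont_sum P \<pi> (T - t) (\<lambda>_. 1) z"
proof -
  define S where "S = (\<Sum>h\<in>{h. length h = Suc t}. ep_prob p0 P \<pi> h * of_bool (G h))"
  have factor: "(\<Sum>e\<in>episodes T. ep_prob p0 P \<pi> e * (of_bool (G (take (Suc t) e)) * g (drop t e)))
      = S * cont_sum P \<pi> (T - t) g z" for g
  proof -
    have "ep_prob p0 P \<pi> h * of_bool (G h) * cont_sum P \<pi> (T - t) g (last h)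
        = ep_prob p0 P \<pi> h * of_bool (G h) * cont_sum P \<pi> (T - t) g z" if "length h = Suc t" for h
      using that fixes_z[of h] last_eq_nth[of h] by (cases "G h") auto
    then show ?thesis
      unfolding sum_episodes_split_at[OF \<open>t \<le> T\<close>, of p0 P \<pi> "\<lambda>h. of_bool (G h)"] S_def sum_distrib_right
      by (intro sum.cong) auto
  qed
  have "S * cont_sum P \<pi> (T - t) (\<lambda>_. 1) z \<noteq> 0"
    using pos factor[of "\<lambda>_. 1"] by (simp add: ev_prob_eq_indicator_sum)
  moreover have "cond_exp p0 P \<pi> T (\<lambda>e. f (drop t e)) (\<lambda>e. G (take (Suc t) e)) =
      S * cont_sum P \<pi> (T - t) f z / (S * cont_sum P \<pi> (T - t) (\<lambda>_. 1) z)"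
    by (simp only: cond_exp_eq_indicator_sums factor[of f] factor[of "\<lambda>_. 1"])
  ultimately show ?thesis by simp
qed

lemma ep_prob_nonneg: "is_dist p0 \<Longrightarrow> is_kernel P \<Longrightarrow> is_policy \<pi> \<Longrightarrow> 0 \<le> ep_prob p0 P \<pi> e"
  unfolding ep_prob_def is_dist_def is_kernel_def is_policy_def
  by (intro mult_nonneg_nonneg prod_nonneg) auto

context
  fixes p0 :: "'s::finite \<Rightarrow> real" and P :: "'s \<Rightarrow> 'a::finite \<Rightarrow> 's \<Rightarrow> real" and \<pi> :: "'s \<Rightarrow> 'a \<Rightarrow> real"
  assumes nonneg: "\<And>e. 0 \<le> ep_prob p0 P \<pi> e"
begin

lemma ep_prob_le_ev_prob: "e \<in> episodes T \<Longrightarrow> A e \<Longrightarrow> ep_prob p0 P \<pi> e \<le> ev_prob p0 P \<pi> T A"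
  unfolding ev_prob_def
  by (rule member_le_sum) (auto intro: nonneg finite_subset[OF _ finite_episodes])

lemma ev_prob_mono:
  "(\<And>e. e \<in> episodes T \<Longrightarrow> A e \<Longrightarrow> B e) \<Longrightarrow> ev_prob p0 P \<pi> T A \<le> ev_prob p0 P \<pi> T B"
  unfolding ev_prob_def
  by (rule sum_mono2) (auto intro: nonneg finite_subset[OF _ finite_episodes])

lemma cond_exp_cong:
  assumes "\<And>e. e \<in> episodes T \<Longrightarrow> A e \<Longrightarrow> 0 < ep_prob p0 P \<pi> e \<Longrightarrow> F e = G e"
  shows "cond_exp p0 P \<pi> T F A = cond_exp p0 P \<pi> T G A"
  unfolding cond_exp_def
proof (intro arg_cong2[where f="(/)"] sum.cong refl)
  fix e assume "e \<in> {e \<in> episodes T. A e}"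
  then show "ep_prob p0 P \<pi> e * F e = ep_prob p0 P \<pi> e * G e"
    using assms[of e] nonneg[of e] by (cases "0 < ep_prob p0 P \<pi> e") auto
qed

lemma cond_exp_future_history_eq_state:
  assumes "t \<le> T" and "length h = Suc t" and pos: "ev_prob p0 P \<pi> T (\<lambda>e. take (Suc t) e = h) > 0"
  shows "cond_exp p0 P \<pi> T (\<lambda>e. f (drop t e)) (\<lambda>e. take (Suc t) e = h) =
     cond_exp p0 P \<pi> T (\<lambda>e. f (drop t e)) (\<lambda>e. e ! t = h ! t)"
proof -
  have "ev_prob p0 P \<pi> T (\<lambda>e. take (Suc t) e = h) \<le> ev_prob p0 P \<pi> T (\<lambda>e. take (Suc t) e ! t = h ! t)"
    by (rule ev_prob_mono) auto
  then have "cond_exp p0 P \<pi> T (\<lambda>e. f (drop t e)) (\<lambda>e. take (Suc t) e ! t = h ! t) =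
      cont_sum P \<pi> (T - t) f (h ! t) / cont_sum P \<pi> (T - t) (\<lambda>_. 1) (h ! t)"
    using pos by (intro cond_exp_future_given_history[OF \<open>t \<le> T\<close>, where G="\<lambda>h'. h' ! t = h ! t"]) auto
  moreover have "cond_exp p0 P \<pi> T (\<lambda>e. f (drop t e)) (\<lambda>e. take (Suc t) e = h) =
      cont_sum P \<pi> (T - t) f (h ! t) / cont_sum P \<pi> (T - t) (\<lambda>_. 1) (h ! t)"
    using pos by (intro cond_exp_future_given_history[OF \<open>t \<le> T\<close>, where G="\<lambda>h'. h' = h"]) auto
  ultimately show ?thesis by simp
qed

lemma cond_exp_episodic_reward_given_history:
  assumes "t \<le> T" and "length h = Suc t" and "ev_prob p0 P \<pi> T (\<lambda>e. take (Suc t) e = h) > 0"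
  shows "cond_exp p0 P \<pi> T (\<lambda>e. rT (fst (e ! T)) (snd (e ! T))) (\<lambda>e. take (Suc t) e = h)
     = qtilde p0 P \<pi> T rT t (fst (h ! t)) (snd (h ! t))"
proof -
  define f where "f u = rT (fst (u ! (T - t))) (snd (u ! (T - t)))" for u :: "('s \<times> 'a) list"
  have "cond_exp p0 P \<pi> T (\<lambda>e. rT (fst (e ! T)) (snd (e ! T))) A = cond_exp p0 P \<pi> T (\<lambda>e. f (drop t e)) A"
    for A by (rule cond_exp_cong) (use \<open>t \<le> T\<close> in \<open>simp add: f_def episodes_def\<close>)
  then show ?thesis
    using cond_exp_future_history_eq_state[OF assms] by (simp add: qtilde_def)
qed

end

lemma cond_exp_const: "ev_prob p0 P \<pi> T A \<noteq> 0 \<Longrightarrow> cond_exp p0 P \<pi> T (\<lambda>_. c) A = c"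
  unfolding cond_exp_def ev_prob_def by (simp add: sum_distrib_right[symmetric])

lemma cond_exp_add_const:
  assumes "ev_prob p0 P \<pi> T A \<noteq> 0"
  shows "cond_exp p0 P \<pi> T (\<lambda>e. c + F e) A = c + cond_exp p0 P \<pi> T F A"
proof -
  let ?S = "{e \<in> episodes T. A e}"
  have "(\<Sum>e\<in>?S. ep_prob p0 P \<pi> e * (c + F e)) = c * (\<Sum>e\<in>?S. ep_prob p0 P \<pi> e) + (\<Sum>e\<in>?S. ep_prob p0 P \<pi> e * F e)"
    by (simp add: distrib_left sum.distrib sum_distrib_left mult.commute[of c])
  then show ?thesis using assms unfolding cond_exp_def ev_prob_def by (simp add: add_divide_distrib)
qed

lemma sum_atMost_add: "(\<Sum>k\<le>t + m. f k) = (\<Sum>k\<le>t. f k) + (\<Sum>\<tau><m. f (Suc t + \<tau>))"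
  by (induction m) (simp_all add: add.assoc)

lemma return_split_at:
  "t \<le> T \<Longrightarrow> (\<Sum>k\<le>T. r k (take (Suc k) e)) = (\<Sum>k\<le>t. r k (take (Suc k) e)) + future_rew T r t e"
  using sum_atMost_add[of "\<lambda>k. r k (take (Suc k) e)" t "T - t"] by (simp add: future_rew_def)

lemma sum_rewards_take: "t \<le> n \<Longrightarrow> (\<Sum>k\<le>t. r k (take (Suc k) (take (Suc n) e))) = (\<Sum>k\<le>t. r k (take (Suc k) e))"
  by (intro sum.cong) (auto simp: min_def)


context
  fixes p0 :: "'s::finite \<Rightarrow> real" and P :: "'s \<Rightarrow> 'a::finite \<Rightarrow> 's \<Rightarrow> real" and \<pi> :: "'s \<Rightarrow> 'a \<Rightarrow> real"
    and T :: nat and rT :: "'s \<Rightarrow> 'a \<Rightarrow> real" and r :: "nat \<Rightarrow> ('s \<times> 'a) list \<Rightarrow> real"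
  assumes nonneg: "\<And>e. 0 \<le> ep_prob p0 P \<pi> e"
    and return_equiv: "\<forall>e\<in>episodes T. ep_prob p0 P \<pi> e > 0 \<longrightarrow>
          rT (fst (e ! T)) (snd (e ! T)) = (\<Sum>t\<le>T. r t (take (Suc t) e))"
    and optimal: "\<forall>t<T. \<forall>s a. ev_prob p0 P \<pi> T (\<lambda>e. e ! t = (s, a)) > 0 \<longrightarrow>
          cond_exp p0 P \<pi> T (future_rew T r t) (\<lambda>e. e ! t = (s, a)) = 0"
    and markov_future: "\<forall>t\<le>T. \<forall>h. length h = Suc t \<longrightarrow> ev_prob p0 P \<pi> T (\<lambda>e. take (Suc t) e = h) > 0 \<longrightarrow>
          cond_exp p0 P \<pi> T (future_rew T r t) (\<lambda>e. e ! t = h ! t) =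
          cond_exp p0 P \<pi> T (future_rew T r t) (\<lambda>e. take (Suc t) e = h)"
begin

lemma cond_exp_future_rew_given_history:
  assumes "t \<le> T" and "length h = Suc t" and pos: "ev_prob p0 P \<pi> T (\<lambda>e. take (Suc t) e = h) > 0"
  shows "cond_exp p0 P \<pi> T (future_rew T r t) (\<lambda>e. take (Suc t) e = h) = 0"
proof (cases "t < T")
  case True
  obtain s a where sa: "h ! t = (s, a)" by fastforce
  have "ev_prob p0 P \<pi> T (\<lambda>e. take (Suc t) e = h) \<le> ev_prob p0 P \<pi> T (\<lambda>e. e ! t = (s, a))"
    by (rule ev_prob_mono[OF nonneg]) (auto simp: sa[symmetric])
  with pos True optimal have "cond_exp p0 P \<pi> T (future_rew T r t) (\<lambda>e. e ! t = (s, a)) = 0"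
    by auto
  then show ?thesis
    using markov_future[rule_format, OF assms] by (simp add: sa)
next
  case False
  then show ?thesis by (simp add: future_rew_def cond_exp_def)
qed

lemma cumulative_reward_eq_qtilde:
  assumes "t \<le> T" and "length h = Suc t" and pos: "ev_prob p0 P \<pi> T (\<lambda>e. take (Suc t) e = h) > 0"
  shows "(\<Sum>k\<le>t. r k (take (Suc k) h)) = qtilde p0 P \<pi> T rT t (fst (h ! t)) (snd (h ! t))"
proof -
  define C where "C = (\<Sum>k\<le>t. r k (take (Suc k) h))"
  have "qtilde p0 P \<pi> T rT t (fst (h ! t)) (snd (h ! t))
      = cond_exp p0 P \<pi> T (\<lambda>e. rT (fst (e ! T)) (snd (e ! T))) (\<lambda>e. take (Suc t) e = h)"
    using cond_exp_episodic_reward_given_history[OF nonneg assms] ..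
  also have "\<dots> = cond_exp p0 P \<pi> T (\<lambda>e. C + future_rew T r t e) (\<lambda>e. take (Suc t) e = h)"
  proof (rule cond_exp_cong[OF nonneg])
    fix e assume "e \<in> episodes T" "take (Suc t) e = h" "0 < ep_prob p0 P \<pi> e"
    then show "rT (fst (e ! T)) (snd (e ! T)) = C + future_rew T r t e"
      using return_equiv return_split_at[OF \<open>t \<le> T\<close>] sum_rewards_take[of t t r e]
      by (simp add: C_def)
  qed
  also have "\<dots> = C"
    using pos cond_exp_future_rew_given_history[OF assms] by (simp add: cond_exp_add_const)
  finally show ?thesis by (simp add: C_def)
qed

lemma reward_eq_qtilde_diff:
  assumes e: "e \<in> episodes T" "0 < ep_prob p0 P \<pi> e" and t: "1 \<le> t" "t \<le> T"
  shows "r t (take (Suc t) e) =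
    qtilde p0 P \<pi> T rT t (fst (e ! t)) (snd (e ! t)) - qtilde p0 P \<pi> T rT (t - 1) (fst (e ! (t - 1))) (snd (e ! (t - 1)))"
proof -
  have cumulative: "(\<Sum>k\<le>n. r k (take (Suc k) e)) = qtilde p0 P \<pi> T rT n (fst (e ! n)) (snd (e ! n))"
    if "n \<le> T" for n
  proof -
    have "ev_prob p0 P \<pi> T (\<lambda>e'. take (Suc n) e' = take (Suc n) e) > 0"
      using e(2) ep_prob_le_ev_prob[OF nonneg e(1), of "\<lambda>e'. take (Suc n) e' = take (Suc n) e"]
      by simp
    then show ?thesis
      using cumulative_reward_eq_qtilde[of n "take (Suc n) e"] that e(1)
      by (simp add: episodes_def sum_rewards_take)
  qed
  obtain n where "t = Suc n" using t by (cases t) auto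
  then show ?thesis using cumulative[of t] cumulative[of n] t by simp
qed

end

theorem mainTheorem2:
  fixes p0 :: "'s::finite \<Rightarrow> real"
    and P :: "'s \<Rightarrow> 'a::finite \<Rightarrow> 's \<Rightarrow> real"
    and \<pi> :: "'s \<Rightarrow> 'a \<Rightarrow> real"
    and T :: nat
    and rT :: "'s \<Rightarrow> 'a \<Rightarrow> real"
    and r :: "nat \<Rightarrow> ('s \<times> 'a) list \<Rightarrow> real"
  assumes p0: "is_dist p0"
    and P: "is_kernel P"
    and pol: "is_policy \<pi>"
    and strict_return_equiv:
      "\<forall>\<pi>'. is_policy \<pi>' \<longrightarrow> (\<forall>e\<in>episodes T. ep_prob p0 P \<pi>' e > 0 \<longrightarrow>
          rT (fst (e ! T)) (snd (e ! T)) = (\<Sum>t\<le>T. r t (take (Suc t) e)))"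
    and optimal:
      "\<forall>t<T. \<forall>s a. ev_prob p0 P \<pi> T (\<lambda>e. e ! t = (s, a)) > 0 \<longrightarrow>
          cond_exp p0 P \<pi> T (future_rew T r t) (\<lambda>e. e ! t = (s, a)) = 0"
    and markov_future:
      "\<forall>t\<le>T. \<forall>h. length h = Suc t \<longrightarrow> ev_prob p0 P \<pi> T (\<lambda>e. take (Suc t) e = h) > 0 \<longrightarrow>
          cond_exp p0 P \<pi> T (future_rew T r t) (\<lambda>e. e ! t = h ! t) =
          cond_exp p0 P \<pi> T (future_rew T r t) (\<lambda>e. take (Suc t) e = h)"
  shows "\<forall>t. 1 \<le> t \<and> t \<le> T \<longrightarrow> (\<forall>x y.
           ev_prob p0 P \<pi> T (\<lambda>e. e ! (t - 1) = x \<and> e ! t = y) > 0 \<longrightarrow>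
           cond_exp p0 P \<pi> T (\<lambda>e. r t (take (Suc t) e)) (\<lambda>e. e ! (t - 1) = x \<and> e ! t = y) =
           qtilde p0 P \<pi> T rT t (fst y) (snd y) - qtilde p0 P \<pi> T rT (t - 1) (fst x) (snd x))"
proof (intro allI impI)
  fix t x y
  assume t: "1 \<le> t \<and> t \<le> T" and pos: "ev_prob p0 P \<pi> T (\<lambda>e. e ! (t - 1) = x \<and> e ! t = y) > 0"
  have nonneg: "\<And>e. 0 \<le> ep_prob p0 P \<pi> e" using ep_prob_nonneg[OF p0 P pol] .
  have "cond_exp p0 P \<pi> T (\<lambda>e. r t (take (Suc t) e)) (\<lambda>e. e ! (t - 1) = x \<and> e ! t = y)
      = cond_exp p0 P \<pi> T (\<lambda>_. qtilde p0 P \<pi> T rT t (fst y) (snd y) - qtilde p0 P \<pi> T rT (t - 1) (fst x) (snd x))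
          (\<lambda>e. e ! (t - 1) = x \<and> e ! t = y)"
    using reward_eq_qtilde_diff[OF nonneg _ optimal markov_future] strict_return_equiv pol t
    by (intro cond_exp_cong[OF nonneg]) auto
  also have "\<dots> = qtilde p0 P \<pi> T rT t (fst y) (snd y) - qtilde p0 P \<pi> T rT (t - 1) (fst x) (snd x)"
    using pos by (intro cond_exp_const) auto
  finally show "cond_exp p0 P \<pi> T (\<lambda>e. r t (take (Suc t) e)) (\<lambda>e. e ! (t - 1) = x \<and> e ! t = y) =
           qtilde p0 P \<pi> T rT t (fst y) (snd y) - qtilde p0 P \<pi> T rT (t - 1) (fst x) (snd x)" .
qed

end
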